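(* Let $C\in\mathbb{R}^{n\times n}$ be symmetric, $\rho>0$, and let $(\tilde\sigma^k,\sigma^k,y^k)$ be generated by the ADMM-BM algorithm described in the context, with Assumption A holding. Then for every iteration $k$, $$L_\rho(\tilde\sigma^k,\sigma^k,y^k)-L_\rho(\tilde\sigma^{k+1},\sigma^{k+1},y^{k+1})\ \ge\ \Big(\frac{\rho\min_{i\in[n]}\|\gamma_i^k\|}{2}-\frac{\|C\|^2}{\rho}\Big)\|\tilde\sigma^{k+1}-\tilde\sigma^k\|_F^2+\frac\rho2\|\sigma^{k+1}-\sigma^k\|_F^2.$$
   Context: $\langle A,B\rangle=\mathrm{Tr}(A^\top B)$, $\|\cdot\|_F$ Frobenius norm, $\|C\|$ spectral norm. For $\sigma\in\mathbb{R}^{n\times r}$, $\sigma_i$ is its $i$-th row; $\mathcal{M}=\{\sigma\in\mathbb{R}^{n\times r}:\|\sigma_i\|=1\ \forall i\}$. ADMM-BM with parameter $\rho$: choose $\tilde\sigma^0\in\mathcal{M}$, $\sigma^0=\tilde\sigma^0$, $y^0=C\tilde\sigma^0$. For $k=0,1,\dots$: $\gamma^k=\sigma^k-\frac1\rho(y^k+C\sigma^k)$ with rows $\gamma_i^k$; $\tilde\sigma^{k+1}_i=\gamma_i^k/\|\gamma_i^k\|$; $\sigma^{k+1}=\tilde\sigma^{k+1}+\frac1\rho(y^k-C\tilde\sigma^{k+1})$; $y^{k+1}=y^k+\rho(\tilde\sigma^{k+1}-\sigma^{k+1})$. Assumption A: $\gamma_i^k\neq0$ for all $i,k$. $L_\rho(\tilde\sigma,\sigma,y)=\langle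 C,\tilde\sigma\sigma^\top\rangle+\langle y,\tilde\sigma-\sigma\rangle+\frac\rho2\|\tilde\sigma-\sigma\|_F^2+\sum_i\mathcal{I}_{\{\|u\|=1\}}(\tilde\sigma_i)$, $\mathcal{I}_S$ the indicator function of $S$. *)

theory Defs
  imports "HOL-Analysis.Analysis"
begin

text \<open>Matrices in R^{n x r} are represented as real^'r^'n (row i is A $ i).\<close>

definition frob_inner :: "real^'c^'b \<Rightarrow> real^'c^'b \<Rightarrow> real" where
  "frob_inner A B = (\<Sum>i\<in>UNIV. \<Sum>j\<in>UNIV. A $ i $ j * B $ i $ j)"

definition frob_norm :: "real^'c^'b \<Rightarrow> real" where
  "frob_norm A = sqrt (frob_inner A A)"

definition spec_norm :: "real^'n^'n \<Rightarrow> real" where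
  "spec_norm C = onorm (\<lambda>x. C *v x)"

definition oblique_M :: "(real^'r^'n) set" where
  "oblique_M = {s. \<forall>i. norm (s $ i) = 1}"

definition sphere_ind :: "real^'r \<Rightarrow> ereal" where
  "sphere_ind u = (if norm u = 1 then 0 else \<infinity>)"

definition L_rho :: "real \<Rightarrow> real^'n^'n \<Rightarrow> real^'r^'n \<Rightarrow> real^'r^'n \<Rightarrow> real^'r^'n \<Rightarrow> ereal" where
  "L_rho \<rho> C st s y =
     ereal (frob_inner C (st ** transpose s) + frob_inner y (st - s)
            + \<rho> / 2 * (frob_norm (st - s))\<^sup>2)
     + (\<Sum>i\<in>UNIV. sphere_ind (st $ i))"

end

(*
  On the oblique manifold the indicator terms vanish, and all feasible points have the same
  Frobenius norm, so L_rho is a smooth function there.  The sigma-tilde update lowers L_rho by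
  rho <gamma, sigma-tilde' - sigma-tilde>; as row i of sigma-tilde' is gamma_i normalised, that
  row contributes |gamma_i|/2 |sigma-tilde'_i - sigma-tilde_i|^2.  The sigma update minimises a
  rho-strongly convex quadratic exactly, gaining rho/2 |sigma' - sigma|^2.  The dual update costs
  |y' - y|^2 / rho, and the invariant y = C sigma-tilde bounds this by
  |C|^2 / rho |sigma-tilde' - sigma-tilde|^2.
*)
theory Submission
  imports Defs
begin

lemma frob_inner_eq_inner: "frob_inner A B = inner A B"
  unfolding frob_inner_def inner_vec_def inner_real_def by simp

lemma frob_norm_eq_norm: "frob_norm A = norm A"
  unfolding frob_norm_def frob_inner_eq_inner by (simp add: norm_eq_sqrt_inner)

lemma power2_norm_vec_rows: "(norm (X :: real^'c^'b))\<^sup>2 = (\<Sum>i\<in>UNIV. (norm (X $ i))\<^sup>2)"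
  unfolding power2_norm_eq_inner inner_vec_def ..

lemma matrix_diff_ldistrib: "(A :: real^'n^'m) ** (B - C) = A ** B - A ** C"
  by (simp add: matrix_matrix_mult_def vec_eq_iff sum_subtractf right_diff_distrib)

lemma inner_transpose: "inner (transpose A) (transpose B) = inner (A :: real^'c^'b) B"
  unfolding inner_vec_def transpose_def by (simp add: sum.swap[of _ "UNIV :: 'b set"])

lemma norm_transpose: "norm (transpose A) = norm (A :: real^'c^'b)"
  by (simp add: norm_eq_sqrt_inner inner_transpose)

lemma inner_matrix_mult_transpose:
  "inner (C :: real^'n^'m) (A ** transpose B) = inner (C ** B) (A :: real^'r^'m)"
proof -
  have "inner C (A ** transpose B) = (\<Sum>i\<in>UNIV. \<Sum>j\<in>UNIV. \<Sum>k\<in>UNIV. C$i$j * A$i$k * B$j$k)"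
    by (simp add: inner_vec_def matrix_matrix_mult_def transpose_def sum_distrib_left mult_ac)
  also have "\<dots> = (\<Sum>i\<in>UNIV. \<Sum>k\<in>UNIV. \<Sum>j\<in>UNIV. C$i$j * A$i$k * B$j$k)"
    by (rule sum.cong[OF refl], rule sum.swap)
  also have "\<dots> = inner (C ** B) A"
    by (simp add: inner_vec_def matrix_matrix_mult_def sum_distrib_left sum_distrib_right mult_ac)
  finally show ?thesis .
qed

lemma inner_symmetric_matrix_mult:
  assumes "transpose C = C"
  shows "inner ((C :: real^'n^'n) ** B) (A :: real^'r^'n) = inner B (C ** A)"
proof -
  have "inner (C ** B) A = inner (transpose C) (transpose (A ** transpose B))"
    by (simp add: inner_transpose inner_matrix_mult_transpose)
  also have "\<dots> = inner (C ** A) B"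
    by (simp add: assms matrix_transpose_mul inner_matrix_mult_transpose)
  finally show ?thesis by (simp add: inner_commute)
qed

lemma transpose_matrix_mult_row:
  "transpose (A ** B) $ j = (A :: real^'n^'m) *v (transpose B $ j)"
  by (simp add: transpose_def matrix_matrix_mult_def matrix_vector_mult_def mult.commute)

text \<open>The columns of A ** X are the images of the columns of X under A.\<close>
lemma norm_matrix_mult_le_onorm:
  "norm ((A :: real^'n^'m) ** (X :: real^'r^'n)) \<le> onorm ((*v) A) * norm X"
proof (rule power2_le_imp_le)
  have "(norm (A ** X))\<^sup>2 = (\<Sum>j\<in>UNIV. (norm (A *v (transpose X $ j)))\<^sup>2)"
    by (simp add: norm_transpose[symmetric, of "A ** X"] power2_norm_vec_rows
        transpose_matrix_mult_row)
  also have "\<dots> \<le> (\<Sum>j\<in>UNIV. (onorm ((*v) A) * norm (transpose X $ j))\<^sup>2)"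
    by (intro sum_mono power_mono onorm) auto
  also have "\<dots> = (onorm ((*v) A) * norm X)\<^sup>2"
    by (simp add: power_mult_distrib sum_distrib_left[symmetric] power2_norm_vec_rows[symmetric]
        norm_transpose)
  finally show "(norm (A ** X))\<^sup>2 \<le> (onorm ((*v) A) * norm X)\<^sup>2" .
  show "0 \<le> onorm ((*v) A) * norm X"
    by (simp add: onorm_pos_le)
qed

lemma power2_norm_oblique: "A \<in> oblique_M \<Longrightarrow> (norm (A :: real^'r^'n))\<^sup>2 = real CARD('n)"
  by (simp add: power2_norm_vec_rows oblique_M_def)

lemma inner_sgn_diff:
  fixes g u :: "'a :: real_inner"
  assumes "norm u = 1"
  shows "inner g (sgn g - u) = norm g / 2 * (norm (sgn g - u))\<^sup>2"
proof (cases "g = 0")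
  case False
  define e where "e = sgn g"
  have e: "inner e e = 1"
    using False by (simp add: e_def dot_square_norm norm_sgn)
  have u: "inner u u = 1"
    using assms by (simp add: dot_square_norm)
  have "g = norm g *\<^sub>R e"
    using False by (simp add: e_def sgn_div_norm)
  then have "inner g (e - u) = inner (norm g *\<^sub>R e) (e - u)"
    by (rule arg_cong)
  also have "\<dots> = norm g * (1 - inner e u)"
    by (simp add: inner_diff_right e right_diff_distrib)
  also have "\<dots> = norm g / 2 * (norm (e - u))\<^sup>2"
    by (simp add: power2_norm_eq_inner inner_diff_left inner_diff_right inner_commute[of u e] e u)
  finally show ?thesis
    by (simp only: e_def)
qed simp

lemma inner_rowwise_sgn_diff_ge:
  fixes g a a' :: "real^'r^'n"
  assumes a: "a \<in> oblique_M" and a': "\<And>i. a' $ i = sgn (g $ i)"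
  shows "Min (range (\<lambda>i. norm (g $ i))) / 2 * (norm (a' - a))\<^sup>2 \<le> inner g (a' - a)"
proof -
  let ?m = "Min (range (\<lambda>i. norm (g $ i)))"
  have "?m / 2 * (norm (a' - a))\<^sup>2 = (\<Sum>i\<in>UNIV. ?m / 2 * (norm (a' $ i - a $ i))\<^sup>2)"
    by (simp add: power2_norm_vec_rows sum_distrib_left)
  also have "\<dots> \<le> (\<Sum>i\<in>UNIV. norm (g $ i) / 2 * (norm (a' $ i - a $ i))\<^sup>2)"
    by (intro sum_mono mult_right_mono divide_right_mono) auto
  also have "\<dots> = (\<Sum>i\<in>UNIV. inner (g $ i) (a' $ i - a $ i))"
    using a by (simp add: a' inner_sgn_diff oblique_M_def)
  also have "\<dots> = inner g (a' - a)"
    by (simp add: inner_vec_def)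
  finally show ?thesis .
qed

definition L_rho_smooth :: "real \<Rightarrow> real^'n^'n \<Rightarrow> real^'r^'n \<Rightarrow> real^'r^'n \<Rightarrow> real^'r^'n \<Rightarrow> real"
  where "L_rho_smooth \<rho> C st s y = inner (C ** s) st + inner y (st - s) + \<rho> / 2 * (norm (st - s))\<^sup>2"

lemma L_rho_oblique: "st \<in> oblique_M \<Longrightarrow> L_rho \<rho> C st s y = ereal (L_rho_smooth \<rho> C st s y)"
  by (simp add: L_rho_def L_rho_smooth_def oblique_M_def sphere_ind_def frob_inner_eq_inner
      frob_norm_eq_norm inner_matrix_mult_transpose)

lemma L_rho_smooth_st_step:
  assumes "(norm a')\<^sup>2 = (norm a)\<^sup>2" and "\<rho> \<noteq> 0"
    and g: "g = b - (1 / \<rho>) *\<^sub>R (Y + C ** b)"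
  shows "L_rho_smooth \<rho> C a b Y - L_rho_smooth \<rho> C a' b Y = \<rho> * inner g (a' - a)"
proof -
  have "\<rho> *\<^sub>R g = \<rho> *\<^sub>R b - Y - C ** b"
    using \<open>\<rho> \<noteq> 0\<close> by (simp add: g scaleR_diff_right)
  then have "\<rho> * inner g (a' - a) = inner (\<rho> *\<^sub>R b - Y - C ** b) (a' - a)"
    by (metis inner_scaleR_left)
  then show ?thesis
    using assms(1)
    by (simp add: L_rho_smooth_def power2_norm_eq_inner inner_diff_left inner_diff_right
        inner_commute algebra_simps)
qed

text \<open>As a function of b, the Lagrangian is a quadratic with Hessian \<rho> I whose critical point
  is exactly the updated b'.\<close>
lemma L_rho_smooth_s_step:
  assumes "transpose C = C" and "\<rho> \<noteq> 0"
    and b': "b' = a' + (1 / \<rho>) *\<^sub>R (Y - C ** a')"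
  shows "L_rho_smooth \<rho> C a' b Y - L_rho_smooth \<rho> C a' b' Y = \<rho> / 2 * (norm (b' - b))\<^sup>2"
proof -
  have Ca': "C ** a' = Y - \<rho> *\<^sub>R (b' - a')"
    using \<open>\<rho> \<noteq> 0\<close> by (simp add: b')
  show ?thesis
    unfolding L_rho_smooth_def inner_symmetric_matrix_mult[OF assms(1), of b a']
      inner_symmetric_matrix_mult[OF assms(1), of b' a'] Ca' power2_norm_eq_inner
    by (simp add: inner_diff_left inner_diff_right inner_commute algebra_simps)
qed

lemma L_rho_smooth_y_step:
  assumes "\<rho> \<noteq> 0" and Y': "Y' = Y + \<rho> *\<^sub>R (a' - b')"
  shows "L_rho_smooth \<rho> C a' b' Y - L_rho_smooth \<rho> C a' b' Y' = - (norm (Y' - Y))\<^sup>2 / \<rho>"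
proof -
  have "a' - b' = (1 / \<rho>) *\<^sub>R (Y' - Y)"
    using assms by simp
  then show ?thesis
    by (simp add: L_rho_smooth_def power2_norm_eq_inner inner_diff_left diff_divide_distrib)
qed

lemma L_rho_smooth_sweep_decrease:
  fixes C :: "real^'n^'n" and a b Y a' b' Y' g :: "real^'r^'n"
  assumes symC: "transpose C = C" and rho: "\<rho> > 0"
    and a: "a \<in> oblique_M" and a': "a' \<in> oblique_M"
    and Y: "Y = C ** a" and Y': "Y' = C ** a'"
    and g: "g = b - (1 / \<rho>) *\<^sub>R (Y + C ** b)"
    and a'_rows: "\<And>i. a' $ i = sgn (g $ i)"
    and b': "b' = a' + (1 / \<rho>) *\<^sub>R (Y - C ** a')"
    and Y'_upd: "Y' = Y + \<rho> *\<^sub>R (a' - b')"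
  shows "(\<rho> * Min (range (\<lambda>i. norm (g $ i))) / 2 - (spec_norm C)\<^sup>2 / \<rho>) * (norm (a' - a))\<^sup>2
          + \<rho> / 2 * (norm (b' - b))\<^sup>2
       \<le> L_rho_smooth \<rho> C a b Y - L_rho_smooth \<rho> C a' b' Y'"
proof -
  let ?L = "L_rho_smooth \<rho> C"
  have "(norm a')\<^sup>2 = (norm a)\<^sup>2"
    using power2_norm_oblique[OF a] power2_norm_oblique[OF a'] by simp
  then have st_step: "?L a b Y - ?L a' b Y = \<rho> * inner g (a' - a)"
    using rho g by (intro L_rho_smooth_st_step) auto
  have s_step: "?L a' b Y - ?L a' b' Y = \<rho> / 2 * (norm (b' - b))\<^sup>2"
    using symC rho b' by (intro L_rho_smooth_s_step) auto
  have y_step: "?L a' b' Y - ?L a' b' Y' = - (norm (Y' - Y))\<^sup>2 / \<rho>"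
    using rho Y'_upd by (intro L_rho_smooth_y_step) auto
  have "\<rho> * (Min (range (\<lambda>i. norm (g $ i))) / 2 * (norm (a' - a))\<^sup>2) \<le> \<rho> * inner g (a' - a)"
    using rho inner_rowwise_sgn_diff_ge[OF a a'_rows] by simp
  moreover have "(norm (Y' - Y))\<^sup>2 / \<rho> \<le> (spec_norm C)\<^sup>2 * (norm (a' - a))\<^sup>2 / \<rho>"
    using rho norm_matrix_mult_le_onorm[of C "a' - a"]
    by (intro divide_right_mono)
      (simp_all add: Y Y' matrix_diff_ldistrib spec_norm_def power_mult_distrib[symmetric]
        power_mono)
  ultimately show ?thesis
    using st_step s_step y_step by (simp add: algebra_simps)
qed

theorem lemma1:
  fixes C :: "real^'n^'n"
    and \<rho> :: real
    and st s y \<gamma> :: "nat \<Rightarrow> real^'r^'n"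
  assumes symC: "transpose C = C"
    and rho_pos: "\<rho> > 0"
    and init_M: "st 0 \<in> oblique_M"
    and init_s: "s 0 = st 0"
    and init_y: "y 0 = C ** st 0"
    and gamma_def: "\<And>k. \<gamma> k = s k - (1 / \<rho>) *\<^sub>R (y k + C ** s k)"
    and st_upd: "\<And>k i. st (Suc k) $ i = (1 / norm (\<gamma> k $ i)) *\<^sub>R (\<gamma> k $ i)"
    and s_upd: "\<And>k. s (Suc k) = st (Suc k) + (1 / \<rho>) *\<^sub>R (y k - C ** st (Suc k))"
    and y_upd: "\<And>k. y (Suc k) = y k + \<rho> *\<^sub>R (st (Suc k) - s (Suc k))"
    and assumptionA: "\<And>k i. \<gamma> k $ i \<noteq> 0"
  shows "\<forall>k. L_rho \<rho> C (st k) (s k) (y k) - L_rho \<rho> C (st (Suc k)) (s (Suc k)) (y (Suc k))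
           \<ge> ereal ((\<rho> * Min (range (\<lambda>i. norm (\<gamma> k $ i))) / 2 - (spec_norm C)\<^sup>2 / \<rho>)
                     * (frob_norm (st (Suc k) - st k))\<^sup>2
                   + \<rho> / 2 * (frob_norm (s (Suc k) - s k))\<^sup>2)"
proof -
  have st_rows: "st (Suc k) $ i = sgn (\<gamma> k $ i)" for k i
    by (simp add: st_upd sgn_div_norm divide_inverse)
  have feasible: "st k \<in> oblique_M" for k
    using init_M by (cases k) (simp_all add: oblique_M_def st_rows norm_sgn assumptionA)
  have dual_invariant: "y k = C ** st k" for k
    using init_y rho_pos by (cases k) (simp_all add: y_upd s_upd)
  show ?thesis
    using L_rho_smooth_sweep_decrease[OF symC rho_pos feasible feasible dual_invariant
        dual_invariant gamma_def st_rows s_upd y_upd]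
    by (simp add: L_rho_oblique[OF feasible] frob_norm_eq_norm)
qed

end
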